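(* Let $\Theta(t;\lambda)$ ($t\in\mathbb{R}$, $\lambda\ge0$) be a threshold function, i.e. for every $\lambda\ge0$: (1) $\Theta(-t;\lambda)=-\Theta(t;\lambda)$; (2) $\Theta(t;\lambda)\le\Theta(t';\lambda)$ for $t\le t'$; (3) $\lim_{t\to\infty}\Theta(t;\lambda)=\infty$; (4) $0\le\Theta(t;\lambda)\le t$ for $0\le t<\infty$. For $u\ge0$ define $\Theta^{-1}(u;\lambda)=\sup\{t:\Theta(t;\lambda)\le u\}$, $s(u;\lambda)=\Theta^{-1}(u;\lambda)-u$, and $P_\Theta(\theta;\lambda)=\int_0^{|\theta|}s(u;\lambda)\,du$. Let $P(\cdot;\cdot)$ be any function such that $P(\theta;\lambda)-P(0;\lambda)=P_\Theta(\theta;\lambda)+q(\theta;\lambda)$, where $q(\cdot;\lambda)\ge0$ and $q(\Theta(\theta;\lambda);\lambda)=0$ for all $\theta$. Let $\mathbf{X}\in\mathbb{R}^{n\times p}$ have full column rank $p$, $\mathbf{y}\in\mathbb{R}^n$, $\lambda_1,\dots,\lambda_n\ge0$, and define $$f_P(\boldsymbol\beta,\boldsymbol\gamma)=\frac12\|\mathbf{y}-\mathbf{X}\boldsymbol\beta-\boldsymbol\gamma\|_2^2+\sum_{i=1}^n P(\gamma_i;\lambda_i).$$ Consider the $\Theta$-IPOD iteration: starting from any $\boldsymbol\gamma^{(0)}\in\mathbb{R}^n$, for $j\ge0$ set $\boldsymbol\beta^{(j)}=(\mathbf{X}^\top\mathbf{X})^{-1}\mathbf{X}^\top(\mathbf{y}-\boldsymbol\gamma^{(j)})$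 and $\gamma^{(j+1)}_i=\Theta(y_i-\mathbf{x}_i^\top\boldsymbol\beta^{(j)};\lambda_i)$ for each $i$. Then for every $j\ge0$, $$f_P(\boldsymbol\beta^{(j)},\boldsymbol\gamma^{(j)})\ge f_P(\boldsymbol\beta^{(j)},\boldsymbol\gamma^{(j+1)})\ge f_P(\boldsymbol\beta^{(j+1)},\boldsymbol\gamma^{(j+1)}).$$
   Context: $\mathbf{x}_i^\top$ denotes the $i$-th row of $\mathbf{X}$. The iteration alternates an ordinary least squares fit of $\mathbf{y}-\boldsymbol\gamma$ on $\mathbf{X}$ with componentwise thresholding of the residuals. *)

theory Defs
  imports "HOL-Analysis.Analysis"
begin

definition threshold_function :: "(real \<Rightarrow> real \<Rightarrow> real) \<Rightarrow> bool" where
  "threshold_function \<Theta> \<longleftrightarrow>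
     (\<forall>lm\<ge>0.
        (\<forall>t. \<Theta> (- t) lm = - \<Theta> t lm) \<and>
        (\<forall>t t'. t \<le> t' \<longrightarrow> \<Theta> t lm \<le> \<Theta> t' lm) \<and>
        filterlim (\<lambda>t. \<Theta> t lm) at_top at_top \<and>
        (\<forall>t\<ge>0. 0 \<le> \<Theta> t lm \<and> \<Theta> t lm \<le> t))"

definition theta_inv :: "(real \<Rightarrow> real \<Rightarrow> real) \<Rightarrow> real \<Rightarrow> real \<Rightarrow> real" where
  "theta_inv \<Theta> u lm = Sup {t. \<Theta> t lm \<le> u}"

definition s_fun :: "(real \<Rightarrow> real \<Rightarrow> real) \<Rightarrow> real \<Rightarrow> real \<Rightarrow> real" where
  "s_fun \<Theta> u lm = theta_inv \<Theta> u lm - u"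

definition P_Theta :: "(real \<Rightarrow> real \<Rightarrow> real) \<Rightarrow> real \<Rightarrow> real \<Rightarrow> real" where
  "P_Theta \<Theta> \<theta> lm = integral {0..\<bar>\<theta>\<bar>} (\<lambda>u. s_fun \<Theta> u lm)"

definition fP :: "(real \<Rightarrow> real \<Rightarrow> real) \<Rightarrow> ('n::finite \<Rightarrow> real) \<Rightarrow> real^'p^'n
                  \<Rightarrow> real^'n \<Rightarrow> real^'p \<Rightarrow> real^'n \<Rightarrow> real" where
  "fP P lam X y \<beta> \<gamma> = (1/2) * (norm (y - X *v \<beta> - \<gamma>))\<^sup>2 + (\<Sum>i\<in>UNIV. P (\<gamma> $ i) (lam i))"

end

theory Submission
  imports Defs
begin

text \<open>For \<open>z \<ge> 0\<close> and \<open>\<theta> \<ge> 0\<close>, \<open>(z - \<theta>)\<^sup>2/2 + P\<^sub>\<Theta>(\<theta>)\<close> equals \<open>z\<^sup>2/2\<close> plus the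
  integral of \<open>\<Theta>\<^sup>-\<^sup>1(u) - z\<close> over \<open>[0, \<theta>]\<close>, and this integrand changes sign from
  \<open>\<le> 0\<close> to \<open>\<ge> 0\<close> at \<open>u = \<Theta>(z)\<close>; hence \<open>\<Theta>(z)\<close> minimizes the scalar penalized
  loss, and by symmetry this extends to all \<open>z, \<theta>\<close>. As \<open>q \<ge> 0\<close> vanishes on the range of
  \<open>\<Theta>\<close>, the same holds with \<open>P\<close> in place of \<open>P\<^sub>\<Theta>\<close>, and since \<open>f\<^sub>P\<close> separates
  over the coordinates of \<open>\<gamma>\<close>, the thresholding step does not increase \<open>f\<^sub>P\<close>. The
  least squares step does not either, because the normal equations make the residual
  orthogonal to the column space of \<open>X\<close>.\<close>

lemma integral_minimal_at_sign_change:
  fixes g :: "real \<Rightarrow> real"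
  assumes int: "\<And>b. 0 \<le> b \<Longrightarrow> g integrable_on {0..b}"
    and "0 \<le> a" "0 \<le> b"
    and nonpos: "\<And>u. 0 \<le> u \<Longrightarrow> u < a \<Longrightarrow> g u \<le> 0"
    and nonneg: "\<And>u. a \<le> u \<Longrightarrow> 0 \<le> g u"
  shows "integral {0..a} g \<le> integral {0..b} g"
proof (cases "a \<le> b")
  case True
  have "integral {0..b} g = integral {0..a} g + integral {a..b} g"
    using Henstock_Kurzweil_Integration.integral_combine[OF \<open>0 \<le> a\<close> True int[OF \<open>0 \<le> b\<close>]] by simp
  moreover have "0 \<le> integral {a..b} g"
    using integrable_subinterval_real[OF int[OF \<open>0 \<le> b\<close>]] \<open>0 \<le> a\<close>
    by (intro integral_nonneg) (auto intro: nonneg)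
  ultimately show ?thesis by simp
next
  case False
  have "integral {0..a} g = integral {0..b} g + integral {b..a} g"
    using Henstock_Kurzweil_Integration.integral_combine[OF \<open>0 \<le> b\<close> _ int[OF \<open>0 \<le> a\<close>]] False by simp
  moreover have "integral {b<..<a} g \<le> integral {b<..<a} (\<lambda>_. 0)"
    using integrable_subinterval_real[OF int[OF \<open>0 \<le> a\<close>], of b a] \<open>0 \<le> b\<close>
    by (intro integral_le) (auto simp: integrable_on_open_interval_real intro: nonpos)
  ultimately show ?thesis by (simp add: integral_open_interval_real)
qed

context
  fixes \<Theta> :: "real \<Rightarrow> real \<Rightarrow> real" and lm :: real
  assumes thr: "threshold_function \<Theta>" and lm: "0 \<le> lm"
begin

lemma threshold_odd: "\<Theta> (- t) lm = - \<Theta> t lm"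
  and threshold_mono: "t \<le> t' \<Longrightarrow> \<Theta> t lm \<le> \<Theta> t' lm"
  and threshold_at_top: "filterlim (\<lambda>t. \<Theta> t lm) at_top at_top"
  and threshold_nonneg: "0 \<le> t \<Longrightarrow> 0 \<le> \<Theta> t lm"
  using thr lm unfolding threshold_function_def by blast+

lemma threshold_zero: "\<Theta> 0 lm = 0"
  using threshold_odd[of 0] by simp

lemma bdd_above_threshold_sublevel: "bdd_above {t. \<Theta> t lm \<le> u}"
proof -
  obtain N where N: "\<And>t. N \<le> t \<Longrightarrow> u + 1 \<le> \<Theta> t lm"
    using threshold_at_top by (auto simp: filterlim_at_top eventually_at_top_linorder)
  then have "\<And>t. \<Theta> t lm \<le> u \<Longrightarrow> t \<le> N"
    by (meson le_cases less_add_one not_le order_trans)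
  then show ?thesis by (auto simp: bdd_above_def)
qed

lemma theta_inv_upper: "\<Theta> t lm \<le> u \<Longrightarrow> t \<le> theta_inv \<Theta> u lm"
  unfolding theta_inv_def by (rule cSup_upper) (auto intro: bdd_above_threshold_sublevel)

lemma theta_inv_least:
  assumes "0 \<le> u" and "\<And>t. \<Theta> t lm \<le> u \<Longrightarrow> t \<le> z"
  shows "theta_inv \<Theta> u lm \<le> z"
  unfolding theta_inv_def using assms threshold_zero by (intro cSup_least) (auto intro!: exI[of _ 0])

lemma theta_inv_le_of_less_threshold:
  assumes "0 \<le> u" and "u < \<Theta> z lm"
  shows "theta_inv \<Theta> u lm \<le> z"
proof (rule theta_inv_least)
  fix t assume "\<Theta> t lm \<le> u"
  with assms show "t \<le> z" using threshold_mono[of z t] by force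
qed (use assms in simp)

lemma theta_inv_integrable:
  assumes "0 \<le> a"
  shows "(\<lambda>u. theta_inv \<Theta> u lm) integrable_on {a..b}"
proof (rule integrable_on_mono_on)
  show "mono_on {a..b} (\<lambda>u. theta_inv \<Theta> u lm)"
    using assms by (intro mono_onI theta_inv_least) (auto intro: theta_inv_upper)
qed

lemma square_loss_plus_P_Theta:
  assumes "0 \<le> \<theta>"
  shows "(z - \<theta>)\<^sup>2 / 2 + P_Theta \<Theta> \<theta> lm
           = z\<^sup>2 / 2 + integral {0..\<theta>} (\<lambda>u. theta_inv \<Theta> u lm - z)"
proof -
  have "((\<lambda>u. u - z) has_integral ((\<theta>\<^sup>2 / 2 - z * \<theta>) - (0\<^sup>2 / 2 - z * 0))) {0..\<theta>}"
    by (rule fundamental_theorem_of_calculus) (use assms in \<open>auto intro!: derivative_eq_intros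
        simp flip: has_real_derivative_iff_has_vector_derivative\<close>)
  then have linear: "((\<lambda>u. u - z) has_integral (\<theta>\<^sup>2 / 2 - z * \<theta>)) {0..\<theta>}"
    by simp
  have s_integrable: "(\<lambda>u. s_fun \<Theta> u lm) integrable_on {0..\<theta>}"
    unfolding s_fun_def
    by (intro integrable_diff theta_inv_integrable integrable_continuous_interval continuous_intros) simp
  then have "integral {0..\<theta>} (\<lambda>u. s_fun \<Theta> u lm + (u - z))
               = P_Theta \<Theta> \<theta> lm + (\<theta>\<^sup>2 / 2 - z * \<theta>)"
    using integral_add[OF s_integrable has_integral_integrable[OF linear]] integral_unique[OF linear] assms
    by (simp add: P_Theta_def)
  moreover have "(\<lambda>u. s_fun \<Theta> u lm + (u - z)) = (\<lambda>u. theta_inv \<Theta> u lm - z)"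
    by (simp add: s_fun_def)
  ultimately show ?thesis by (simp add: power2_eq_square field_simps)
qed

lemma threshold_minimizes_P_Theta_nonneg:
  assumes "0 \<le> z" and "0 \<le> \<theta>"
  shows "(z - \<Theta> z lm)\<^sup>2 / 2 + P_Theta \<Theta> (\<Theta> z lm) lm \<le> (z - \<theta>)\<^sup>2 / 2 + P_Theta \<Theta> \<theta> lm"
proof -
  have "integral {0..\<Theta> z lm} (\<lambda>u. theta_inv \<Theta> u lm - z)
          \<le> integral {0..\<theta>} (\<lambda>u. theta_inv \<Theta> u lm - z)"
  proof (rule integral_minimal_at_sign_change)
    show "(\<lambda>u. theta_inv \<Theta> u lm - z) integrable_on {0..b}" for b
      by (intro integrable_diff theta_inv_integrable integrable_const_ivl) simp
  qed (use assms threshold_nonneg theta_inv_upper theta_inv_le_of_less_threshold in auto)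
  then show ?thesis
    using square_loss_plus_P_Theta assms threshold_nonneg by simp
qed

lemma P_Theta_abs: "P_Theta \<Theta> \<bar>\<theta>\<bar> lm = P_Theta \<Theta> \<theta> lm"
  by (simp add: P_Theta_def)

text \<open>By oddness of \<open>\<Theta>\<close> and evenness of \<open>P\<^sub>\<Theta>\<close> it suffices to take \<open>z \<ge> 0\<close>,
  and then \<open>|\<theta>|\<close> is a better competitor than \<open>\<theta>\<close>.\<close>
lemma threshold_minimizes_P_Theta:
  "(z - \<Theta> z lm)\<^sup>2 / 2 + P_Theta \<Theta> (\<Theta> z lm) lm \<le> (z - \<theta>)\<^sup>2 / 2 + P_Theta \<Theta> \<theta> lm"
proof -
  have nonneg_case: "(w - \<Theta> w lm)\<^sup>2 / 2 + P_Theta \<Theta> (\<Theta> w lm) lm \<le> (w - x)\<^sup>2 / 2 + P_Theta \<Theta> x lm"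
    if "0 \<le> w" for w x
  proof -
    have "(w - \<Theta> w lm)\<^sup>2 / 2 + P_Theta \<Theta> (\<Theta> w lm) lm \<le> (w - \<bar>x\<bar>)\<^sup>2 / 2 + P_Theta \<Theta> \<bar>x\<bar> lm"
      using threshold_minimizes_P_Theta_nonneg that by simp
    also have "(w - \<bar>x\<bar>)\<^sup>2 \<le> (w - x)\<^sup>2"
      using that by (cases "0 \<le> x") (auto simp: power2_eq_square algebra_simps mult_le_0_iff)
    finally show ?thesis by (simp add: P_Theta_abs)
  qed
  show ?thesis
  proof (cases "0 \<le> z")
    case False
    then have "(- z - \<Theta> (- z) lm)\<^sup>2 / 2 + P_Theta \<Theta> (\<Theta> (- z) lm) lm
                 \<le> (- z - - \<theta>)\<^sup>2 / 2 + P_Theta \<Theta> (- \<theta>) lm"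
      by (intro nonneg_case) simp
    then show ?thesis
      using P_Theta_abs[of "- \<theta>"] P_Theta_abs[of \<theta>] P_Theta_abs[of "\<Theta> z lm"] P_Theta_abs[of "- \<Theta> z lm"]
      by (simp add: threshold_odd power2_eq_square algebra_simps)
  qed (rule nonneg_case)
qed

end

lemma threshold_minimizes_penalty:
  assumes "threshold_function \<Theta>" and "0 \<le> lm"
    and decomp: "\<And>\<theta>. P \<theta> lm - P 0 lm = P_Theta \<Theta> \<theta> lm + q \<theta>"
    and "\<And>\<theta>. 0 \<le> q \<theta>" and "q (\<Theta> z lm) = 0"
  shows "(z - \<Theta> z lm)\<^sup>2 / 2 + P (\<Theta> z lm) lm \<le> (z - \<theta>)\<^sup>2 / 2 + P \<theta> lm"
  using threshold_minimizes_P_Theta[OF assms(1,2), of z \<theta>] decomp[of \<theta>] decomp[of "\<Theta> z lm"]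
    assms(4)[of \<theta>] assms(5)
  by linarith

lemma fP_eq_sum_coordinates:
  "fP P lam X y b g = (\<Sum>i\<in>UNIV. (y $ i - row i X \<bullet> b - g $ i)\<^sup>2 / 2 + P (g $ i) (lam i))"
  unfolding fP_def power2_norm_eq_inner
  by (simp add: inner_vec_def sum.distrib sum_divide_distrib matrix_vector_mult_def row_def power2_eq_square)

lemma fP_le_of_residual_le:
  assumes "norm (y - g - X *v b) \<le> norm (y - g - X *v b')"
  shows "fP P lam X y b g \<le> fP P lam X y b' g"
proof -
  have "(norm (y - X *v b - g))\<^sup>2 \<le> (norm (y - X *v b' - g))\<^sup>2"
    using assms by (simp add: diff_commute power_mono algebra_simps)
  then show ?thesis unfolding fP_def by simp
qed

lemma inner_transpose_mult: "x \<bullet> (transpose A *v y) = (A *v x) \<bullet> y"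
  for A :: "real^'n^'m"
  by (metis adjoint_matrix adjoint_works matrix_vector_mul_linear)

lemma invertible_gram_matrix:
  fixes X :: "real^'p^'n"
  assumes "rank X = CARD('p)"
  shows "invertible (transpose X ** X)"
proof -
  have "v = 0" if "(transpose X ** X) *v v = 0" for v
  proof -
    have "(X *v v) \<bullet> (X *v v) = 0"
      using that inner_transpose_mult[of v X "X *v v"] by (simp add: matrix_vector_mul_assoc)
    then have "X *v v = X *v 0" by simp
    then show "v = 0" using assms full_rank_injective by (metis injD)
  qed
  then show ?thesis
    by (simp add: matrix_left_invertible_ker invertible_left_inverse)
qed

lemma matrix_inv_right:
  assumes "invertible A"
  shows "A ** matrix_inv A = mat 1"
  using someI_ex[OF assms[unfolded invertible_def]] unfolding matrix_inv_def by blast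

lemma least_squares_minimal:
  fixes X :: "real^'p^'n"
  assumes "rank X = CARD('p)"
  shows "norm (r - X *v (matrix_inv (transpose X ** X) *v (transpose X *v r))) \<le> norm (r - X *v c)"
proof -
  define b where "b = matrix_inv (transpose X ** X) *v (transpose X *v r)"
  have "(transpose X ** X) *v b = transpose X *v r"
    unfolding b_def
    by (simp add: matrix_vector_mul_assoc matrix_inv_right invertible_gram_matrix assms)
  then have "transpose X *v (r - X *v b) = 0"
    by (simp add: matrix_vector_mult_diff_distrib matrix_vector_mul_assoc del: transpose_matrix_vector)
  then have "orthogonal (r - X *v b) (X *v (b - c))"
    unfolding orthogonal_def using inner_transpose_mult[of "b - c" X "r - X *v b"]
    by (simp add: inner_commute)
  then have "(norm (r - X *v c))\<^sup>2 = (norm (r - X *v b))\<^sup>2 + (norm (X *v (b - c)))\<^sup>2"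
    using norm_add_Pythagorean[of "r - X *v b" "X *v (b - c)"]
    by (simp add: matrix_vector_mult_diff_distrib)
  then have "(norm (r - X *v b))\<^sup>2 \<le> (norm (r - X *v c))\<^sup>2" by simp
  then show ?thesis unfolding b_def by (simp add: power2_le_iff_abs_le)
qed

theorem theorem1:
  fixes \<Theta> P q :: "real \<Rightarrow> real \<Rightarrow> real"
    and X :: "real^'p^'n" and y :: "real^'n" and lam :: "'n \<Rightarrow> real"
    and \<beta> :: "nat \<Rightarrow> real^'p" and \<gamma> :: "nat \<Rightarrow> real^'n"
  assumes thr: "threshold_function \<Theta>"
    and decomp: "\<And>\<theta> lm. lm \<ge> 0 \<Longrightarrow> P \<theta> lm - P 0 lm = P_Theta \<Theta> \<theta> lm + q \<theta> lm"
    and q_nonneg: "\<And>\<theta> lm. lm \<ge> 0 \<Longrightarrow> q \<theta> lm \<ge> 0"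
    and q_zero: "\<And>\<theta> lm. lm \<ge> 0 \<Longrightarrow> q (\<Theta> \<theta> lm) lm = 0"
    and rankX: "rank X = CARD('p)"
    and lam_nonneg: "\<And>i. lam i \<ge> 0"
    and beta_def: "\<And>j. \<beta> j = matrix_inv (transpose X ** X) *v (transpose X *v (y - \<gamma> j))"
    and gamma_step: "\<And>j i. \<gamma> (Suc j) $ i = \<Theta> (y $ i - row i X \<bullet> \<beta> j) (lam i)"
  shows "fP P lam X y (\<beta> j) (\<gamma> j) \<ge> fP P lam X y (\<beta> j) (\<gamma> (Suc j)) \<and>
         fP P lam X y (\<beta> j) (\<gamma> (Suc j)) \<ge> fP P lam X y (\<beta> (Suc j)) (\<gamma> (Suc j))"
proof
  show "fP P lam X y (\<beta> j) (\<gamma> (Suc j)) \<le> fP P lam X y (\<beta> j) (\<gamma> j)"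
    unfolding fP_eq_sum_coordinates gamma_step
  proof (rule sum_mono)
    fix i
    show "(y $ i - row i X \<bullet> \<beta> j - \<Theta> (y $ i - row i X \<bullet> \<beta> j) (lam i))\<^sup>2 / 2
            + P (\<Theta> (y $ i - row i X \<bullet> \<beta> j) (lam i)) (lam i)
          \<le> (y $ i - row i X \<bullet> \<beta> j - \<gamma> j $ i)\<^sup>2 / 2 + P (\<gamma> j $ i) (lam i)"
      using lam_nonneg
      by (intro threshold_minimizes_penalty[OF thr, where q = "\<lambda>\<theta>. q \<theta> (lam i)"] decomp q_nonneg q_zero)
  qed
  show "fP P lam X y (\<beta> (Suc j)) (\<gamma> (Suc j)) \<le> fP P lam X y (\<beta> j) (\<gamma> (Suc j))"
    unfolding beta_def[of "Suc j"]
    by (intro fP_le_of_residual_le least_squares_minimal rankX)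
qed

end
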